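(* Let $n>m>0$ be integers and let $\nu\in\mathbb{N}^3$ with $|\nu|=n$. Then $$\sum_{\substack{\mu\in\mathbb{N}^3,\ |\mu|=m\\ \mu\le\nu}} P_\mu(q)\,P_{\nu-\mu}(q)=\binom{n}{m}P_\nu(q)\qquad\text{for all }q\in\mathbb{H},$$ where $\mu\le\nu$ means componentwise inequality.
   Context: Quaternions are written $q=t+e_1x_1+e_2x_2+e_3x_3$ with $e_1=i,e_2=j,e_3=k$. For $\nu=(n_1,n_2,n_3)\in\mathbb{N}^3$ put $|\nu|=n_1+n_2+n_3$. Define $z_j(q)=t e_j-x_j$ for $j=1,2,3$. For $|\nu|=n\ge1$ let $I_\nu$ be the set of $n$-tuples $(i_1,\dots,i_n)\in\{1,2,3\}^n$ in which the value $j$ occurs exactly $n_j$ times, and set $P_\nu(q)=\frac{1}{n!}\sum_{(i_1,\dots,i_n)\in I_\nu} z_{i_1}(q)z_{i_2}(q)\cdots z_{i_n}(q)$ (quaternion products in the indicated order); $P_{(0,0,0)}=1$. *)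

theory Defs
  imports Complex_Main
begin

text \<open>q = t + e1 x1 + e2 x2 + e3 x3 with e1 = i, e2 = j, e3 = k (Hamilton's rules).\<close>

codatatype quat = Quat (Re: real) (Im1: real) (Im2: real) (Im3: real)

lemma quat_eqI [intro?]:
  "\<lbrakk>Re x = Re y; Im1 x = Im1 y; Im2 x = Im2 y; Im3 x = Im3 y\<rbrakk> \<Longrightarrow> x = y"
  by (rule quat.expand) simp

instantiation quat :: ring_1
begin

primcorec zero_quat where
  "Re 0 = 0" | "Im1 0 = 0" | "Im2 0 = 0" | "Im3 0 = 0"

primcorec one_quat where
  "Re 1 = 1" | "Im1 1 = 0" | "Im2 1 = 0" | "Im3 1 = 0"

primcorec plus_quat where
  "Re (x + y) = Re x + Re y" | "Im1 (x + y) = Im1 x + Im1 y"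
| "Im2 (x + y) = Im2 x + Im2 y" | "Im3 (x + y) = Im3 x + Im3 y"

primcorec uminus_quat where
  "Re (- x) = - Re x" | "Im1 (- x) = - Im1 x"
| "Im2 (- x) = - Im2 x" | "Im3 (- x) = - Im3 x"

primcorec minus_quat where
  "Re (x - y) = Re x - Re y" | "Im1 (x - y) = Im1 x - Im1 y"
| "Im2 (x - y) = Im2 x - Im2 y" | "Im3 (x - y) = Im3 x - Im3 y"

primcorec times_quat where
  "Re (x * y) = Re x * Re y - Im1 x * Im1 y - Im2 x * Im2 y - Im3 x * Im3 y"
| "Im1 (x * y) = Re x * Im1 y + Im1 x * Re y + Im2 x * Im3 y - Im3 x * Im2 y"
| "Im2 (x * y) = Re x * Im2 y - Im1 x * Im3 y + Im2 x * Re y + Im3 x * Im1 y"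
| "Im3 (x * y) = Re x * Im3 y + Im1 x * Im2 y - Im2 x * Im1 y + Im3 x * Re y"

instance
  by standard (auto intro: quat_eqI simp: algebra_simps dest: arg_cong[of _ _ Re])

end

definition qunit :: "nat \<Rightarrow> quat" where
  "qunit j = (if j = 1 then Quat 0 1 0 0 else if j = 2 then Quat 0 0 1 0 else Quat 0 0 0 1)"

definition qcoord :: "quat \<Rightarrow> nat \<Rightarrow> real" where
  "qcoord q j = (if j = 1 then Im1 q else if j = 2 then Im2 q else Im3 q)"

definition qreal :: "real \<Rightarrow> quat" where
  "qreal r = Quat r 0 0 0"

definition zfun :: "nat \<Rightarrow> quat \<Rightarrow> quat" where
  "zfun j q = qreal (Re q) * qunit j - qreal (qcoord q j)"

text \<open>Multi-indices nu = (n1,n2,n3) are represented as functions nat => nat;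
  only the values at 1, 2, 3 matter. |nu| = n1 + n2 + n3.\<close>
definition mabs :: "(nat \<Rightarrow> nat) \<Rightarrow> nat" where
  "mabs \<nu> = \<nu> 1 + \<nu> 2 + \<nu> 3"

definition Iset :: "(nat \<Rightarrow> nat) \<Rightarrow> nat list set" where
  "Iset \<nu> = {is. length is = mabs \<nu> \<and> set is \<subseteq> {1,2,3} \<and>
                  (\<forall>j\<in>{1,2,3}. count_list is j = \<nu> j)}"

definition Pfun :: "(nat \<Rightarrow> nat) \<Rightarrow> quat \<Rightarrow> quat" where
  "Pfun \<nu> q = (if mabs \<nu> = 0 then 1 else
     qreal (1 / fact (mabs \<nu>)) * (\<Sum>is\<in>Iset \<nu>. prod_list (map (\<lambda>i. zfun i q) is)))"

end

theory Submission
  imports Defs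
begin

text \<open>Up to the factor \<open>1/n!\<close>, \<open>P\<^sub>\<nu>\<close> is the sum of all words in the letters \<open>z\<^sub>1, z\<^sub>2, z\<^sub>3\<close>
  with letter counts \<open>\<nu>\<close>. Cutting such a word of length \<open>n\<close> after its first \<open>m\<close> letters is a
  bijection onto the pairs (word with counts \<open>\<mu>\<close>, word with counts \<open>\<nu> - \<mu>\<close>), \<open>|\<mu>| = m\<close>, and the
  value of a word is the product of the values of its two pieces, so
  \<open>\<Sum>\<^sub>\<mu> m! P\<^sub>\<mu> (n-m)! P\<^sub>\<nu>\<^sub>-\<^sub>\<mu> = n! P\<^sub>\<nu>\<close>.\<close>

definition mindex :: "nat \<Rightarrow> nat \<Rightarrow> nat \<Rightarrow> nat \<Rightarrow> nat" where
  "mindex a b c = (\<lambda>j. if j = 1 then a else if j = 2 then b else c)"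

definition sub_mindices :: "nat \<Rightarrow> nat \<Rightarrow> nat \<Rightarrow> nat \<Rightarrow> (nat \<times> nat \<times> nat) set" where
  "sub_mindices m n1 n2 n3 =
     {(m1, m2, m3). m1 + m2 + m3 = m \<and> m1 \<le> n1 \<and> m2 \<le> n2 \<and> m3 \<le> n3}"

definition word_sum :: "(nat \<Rightarrow> 'a::ring_1) \<Rightarrow> (nat \<Rightarrow> nat) \<Rightarrow> 'a" where
  "word_sum z \<nu> = (\<Sum>w\<in>Iset \<nu>. prod_list (map z w))"

lemma finite_sub_mindices: "finite (sub_mindices m n1 n2 n3)"
  by (rule finite_subset[of _ "{..n1} \<times> {..n2} \<times> {..n3}"]) (auto simp: sub_mindices_def)

lemma finite_Iset: "finite (Iset \<nu>)"
proof (rule finite_subset)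
  show "Iset \<nu> \<subseteq> {w. set w \<subseteq> {1,2,3} \<and> length w = mabs \<nu>}"
    unfolding Iset_def by auto
  show "finite {w. set w \<subseteq> {1,2,3::nat} \<and> length w = mabs \<nu>}"
    by (rule finite_lists_length_eq) simp
qed

lemma Iset_mabs_0: "mabs \<nu> = 0 \<Longrightarrow> Iset \<nu> = {[]}"
  by (auto simp: Iset_def mabs_def)

lemma count_list_123_sum:
  "set w \<subseteq> {1,2,3::nat} \<Longrightarrow> count_list w 1 + count_list w 2 + count_list w 3 = length w"
  by (induction w) auto

lemma mem_Iset_mindex_iff:
  "w \<in> Iset (mindex a b c) \<longleftrightarrow>
     set w \<subseteq> {1,2,3} \<and> count_list w 1 = a \<and> count_list w 2 = b \<and> count_list w 3 = c"
  using count_list_123_sum[of w] by (auto simp: Iset_def mabs_def mindex_def)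

lemma bij_betw_append_Iset:
  assumes "m \<le> n1 + n2 + n3"
  shows "bij_betw (\<lambda>((m1, m2, m3), x, y). x @ y)
           (SIGMA (m1, m2, m3) : sub_mindices m n1 n2 n3.
              Iset (mindex m1 m2 m3) \<times> Iset (mindex (n1 - m1) (n2 - m2) (n3 - m3)))
           (Iset (mindex n1 n2 n3))"
proof (rule bij_betw_byWitness)
  let ?counts = "\<lambda>x. (count_list x 1, count_list x 2, count_list x 3)"
  let ?Sigma = "SIGMA (m1, m2, m3) : sub_mindices m n1 n2 n3.
    Iset (mindex m1 m2 m3) \<times> Iset (mindex (n1 - m1) (n2 - m2) (n3 - m3))"
  show "\<forall>p \<in> ?Sigma. (\<lambda>w. (?counts (take m w), take m w, drop m w))
                        ((\<lambda>((m1, m2, m3), x, y). x @ y) p) = p"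
    by (auto simp: sub_mindices_def mem_Iset_mindex_iff
                   count_list_123_sum[symmetric] simp del: count_list.simps)
  show "\<forall>w \<in> Iset (mindex n1 n2 n3). (\<lambda>((m1, m2, m3), x, y). x @ y)
          ((\<lambda>w. (?counts (take m w), take m w, drop m w)) w) = w"
    by simp
  show "(\<lambda>((m1, m2, m3), x, y). x @ y) ` ?Sigma \<subseteq> Iset (mindex n1 n2 n3)"
    by (auto simp: sub_mindices_def mem_Iset_mindex_iff)
  show "(\<lambda>w. (?counts (take m w), take m w, drop m w)) ` Iset (mindex n1 n2 n3) \<subseteq> ?Sigma"
  proof (rule image_subsetI)
    fix w assume w: "w \<in> Iset (mindex n1 n2 n3)"
    have split: "count_list w j = count_list (take m w) j + count_list (drop m w) j" for j
      by (metis append_take_drop_id count_list_append)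
    have "set (take m w) \<subseteq> {1,2,3}" "set (drop m w) \<subseteq> {1,2,3}" "length (take m w) = m"
      using w assms count_list_123_sum[of w]
      by (auto simp: mem_Iset_mindex_iff dest: in_set_takeD in_set_dropD)
    then show "(?counts (take m w), take m w, drop m w) \<in> ?Sigma"
      using w count_list_123_sum[of "take m w"] split[of 1] split[of 2] split[of 3]
      by (auto simp: sub_mindices_def mem_Iset_mindex_iff)
  qed
qed

lemma word_sum_convolution:
  assumes "m \<le> n1 + n2 + n3"
  shows "(\<Sum>(m1, m2, m3) \<in> sub_mindices m n1 n2 n3.
            word_sum z (mindex m1 m2 m3) * word_sum z (mindex (n1 - m1) (n2 - m2) (n3 - m3)))
         = word_sum z (mindex n1 n2 n3)"
proof -
  let ?B = "\<lambda>(m1, m2, m3). Iset (mindex m1 m2 m3) \<times> Iset (mindex (n1 - m1) (n2 - m2) (n3 - m3))"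
  have "word_sum z (mindex m1 m2 m3) * word_sum z (mindex (n1 - m1) (n2 - m2) (n3 - m3))
        = (\<Sum>(x, y) \<in> ?B (m1, m2, m3). prod_list (map z (x @ y)))" for m1 m2 m3
    by (simp add: word_sum_def sum_product sum.cartesian_product)
  then have "(\<Sum>(m1, m2, m3) \<in> sub_mindices m n1 n2 n3.
            word_sum z (mindex m1 m2 m3) * word_sum z (mindex (n1 - m1) (n2 - m2) (n3 - m3)))
        = (\<Sum>\<mu> \<in> sub_mindices m n1 n2 n3. \<Sum>(x, y) \<in> ?B \<mu>. prod_list (map z (x @ y)))"
    by (simp add: case_prod_beta)
  also have "\<dots> = (\<Sum>(\<mu>, x, y) \<in> Sigma (sub_mindices m n1 n2 n3) ?B. prod_list (map z (x @ y)))"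
    by (subst sum.Sigma) (auto simp: finite_sub_mindices finite_Iset case_prod_beta)
  also have "\<dots> = word_sum z (mindex n1 n2 n3)"
    unfolding word_sum_def
    using sum.reindex_bij_betw[OF bij_betw_append_Iset[OF assms], of "\<lambda>w. prod_list (map z w)"]
    by (simp add: split_def)
  finally show ?thesis .
qed

lemma qreal_mult: "qreal a * qreal b = qreal (a * b)"
  by (rule quat_eqI) (simp_all add: qreal_def)

lemma qreal_mult_mult: "qreal a * x * (qreal b * y) = qreal (a * b) * (x * y)"
  by (rule quat_eqI) (simp_all add: qreal_def algebra_simps)

lemma qreal_one: "qreal 1 = 1"
  by (rule quat_eqI) (simp_all add: qreal_def)

lemma of_nat_quat: "(of_nat k :: quat) = qreal (real k)"
proof (induction k)
  case 0
  show ?case by (rule quat_eqI) (simp_all add: qreal_def)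
next
  case (Suc k)
  have "qreal (real k) + qreal 1 = qreal (real (Suc k))"
    by (rule quat_eqI) (simp_all add: qreal_def)
  then show ?case by (simp add: Suc qreal_one add.commute)
qed

lemma Pfun_eq_word_sum: "Pfun \<nu> q = qreal (1 / fact (mabs \<nu>)) * word_sum (\<lambda>i. zfun i q) \<nu>"
  by (simp add: Pfun_def word_sum_def Iset_mabs_0 qreal_one)

lemma Pfun_mult_Pfun:
  "Pfun \<mu> q * Pfun \<nu> q = qreal (1 / (fact (mabs \<mu>) * fact (mabs \<nu>))) *
     (word_sum (\<lambda>i. zfun i q) \<mu> * word_sum (\<lambda>i. zfun i q) \<nu>)"
  by (simp add: Pfun_eq_word_sum qreal_mult_mult)

theorem mainTheorem1:
  fixes n m n1 n2 n3 :: nat and q :: quat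
  assumes "0 < m" and "m < n" and "n1 + n2 + n3 = n"
  shows "(\<Sum>(m1, m2, m3) \<in> {(m1, m2, m3). m1 + m2 + m3 = m \<and> m1 \<le> n1 \<and> m2 \<le> n2 \<and> m3 \<le> n3}.
            Pfun (\<lambda>j. if j = 1 then m1 else if j = 2 then m2 else m3) q *
            Pfun (\<lambda>j. if j = 1 then n1 - m1 else if j = 2 then n2 - m2 else n3 - m3) q)
         = of_nat (n choose m) * Pfun (\<lambda>j. if j = 1 then n1 else if j = 2 then n2 else n3) q"
proof -
  let ?S = "word_sum (\<lambda>i. zfun i q)"
  define c where "c = 1 / (fact m * fact (n - m) :: real)"
  have term_eq: "Pfun (mindex m1 m2 m3) q * Pfun (mindex (n1 - m1) (n2 - m2) (n3 - m3)) q
      = qreal c * (?S (mindex m1 m2 m3) * ?S (mindex (n1 - m1) (n2 - m2) (n3 - m3)))"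
    if "(m1, m2, m3) \<in> sub_mindices m n1 n2 n3" for m1 m2 m3
    using that assms
    by (auto simp: Pfun_mult_Pfun c_def sub_mindices_def mabs_def mindex_def)
  have binomial: "real (n choose m) * (1 / fact n) = c"
    using assms binomial_fact[of m n, where 'a=real] by (simp add: c_def)
  have "(\<Sum>(m1, m2, m3) \<in> sub_mindices m n1 n2 n3.
           Pfun (mindex m1 m2 m3) q * Pfun (mindex (n1 - m1) (n2 - m2) (n3 - m3)) q)
        = qreal c * (\<Sum>(m1, m2, m3) \<in> sub_mindices m n1 n2 n3.
           ?S (mindex m1 m2 m3) * ?S (mindex (n1 - m1) (n2 - m2) (n3 - m3)))"
    unfolding sum_distrib_left by (rule sum.cong) (auto simp: term_eq)
  also have "\<dots> = qreal c * ?S (mindex n1 n2 n3)"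
    using assms by (simp add: word_sum_convolution)
  also have "\<dots> = of_nat (n choose m) * Pfun (mindex n1 n2 n3) q"
    using assms binomial
    by (simp add: Pfun_eq_word_sum of_nat_quat mult.assoc[symmetric] qreal_mult mabs_def mindex_def)
  finally show ?thesis
    unfolding sub_mindices_def mindex_def .
qed

end
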